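(* Let $\mathcal{S}$ be a finite set of road segments and $y_1,\dots,y_N$ (collectively $y_{[N]}$) the routes of $N$ historical trips, each a nonempty set of distinct segments. For each $n$ and $s\in y_n$ one observes $T'_{n,s}=\theta_s+\varepsilon_{n,s}$, where the $\theta_s$ are i.i.d. with mean $\mu$ and variance $\tau^2>0$, independent of the errors; for each $n$ the errors $(\varepsilon_{n,s})_{s\in y_n}$ have mean $0$ and covariances $\sigma_{s,t}$; errors from different trips are independent. Fix a route $y\subseteq\mathcal{S}$. (1) Given a partition $\mathscr{S}_y$ of $y$ into super-segments, with $N_S=|\{n:S\subseteq y_n\}|\ge1$ for each $S\in\mathscr{S}_y$, the generalized segment-based estimator $$\hat\Theta_y=\sum_{S\in\mathscr{S}_y}\Big[(1-\phi_S)|S|\mu+\phi_S\frac{\sum_{n:S\subseteq y_n}\sum_{s\in S}T'_{n,s}}{N_S}\Big]$$ has minimal integrated risk over all real weights $(\phi_S)_{S\in\mathscr{S}_y}$ exactly when $(\phi_S)=(\phi^\ast_S)$, where $(\phi^\ast_S)_{S\in\mathscr{S}_y}$ is the unique solution of the linear system $$\sum_{T\in\mathscr{S}_y}\frac{N_{S\cup T}}{N_SN_T}\phi^\ast_T\Big(\sum_{s\in S,t\in T}\sigma_{s,t}\Big)+(\phi^\ast_S-1)|S|\tau^2=0,\qquad S\in\mathscr{S}_y.$$ (2) Given a neighborhood $\delta(y)$ (a set of historical routes) with notation $M_{\delta(y)}$, $N^{\delta(y)}_s$, $\mathcal{S}_{\delta(y)}$, $\bar y_{\delta(y)}$ as below,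 the route-based estimator with weight $\phi$, $$(1-\phi)|y|\mu+\phi\frac{\sum_{n:y_n\in\delta(y)}\sum_{s\in y_n}T'_{n,s}}{M_{\delta(y)}},$$ has minimal integrated risk over all real $\phi$ when $\phi=\phi^\ast_{\delta(y)}(M_{\delta(y)})$ with $$\phi^\ast_{\delta(y)}(M_{\delta(y)})=\frac{\big(\sum_{s\in y}N^{\delta(y)}_s\big)\tau^2}{\sum_{s\in\mathcal{S}_{\delta(y)}}\frac{(N^{\delta(y)}_s)^2}{M_{\delta(y)}}\tau^2+\frac{\sum_{n:y_n\in\delta(y)}\sum_{s,t\in y_n}\sigma_{s,t}}{M_{\delta(y)}}+M_{\delta(y)}\mu^2(\bar y_{\delta(y)}-|y|)^2}.$$
   Context: The integrated risk of an estimator $\hat\Theta_y$ is $\mathbb{E}[(\hat\Theta_y-\sum_{s\in y}\theta_s)^2\mid y_{[N]}]$, expectation over errors and prior of $\theta$, conditional on the historical routes. $N_{S\cup T}=|\{n:S\cup T\subseteq y_n\}|$. $M_{\delta(y)}=\sum_n\mathbf 1\{y_n\in\delta(y)\}$, $N^{\delta(y)}_s=|\{n:y_n\in\delta(y),s\in y_n\}|$, $\mathcal{S}_{\delta(y)}=\bigcup_{y'\in\delta(y)}y'$, $\bar y_{\delta(y)}=\sum_{n:y_n\in\delta(y)}|y_n|/M_{\delta(y)}$. No distributional assumption beyond means and covariances is imposed. *)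

theory Defs
  imports "HOL-Probability.Probability" "HOL-Library.Disjoint_Sets"
begin

(* Historical routes: yr n for n < N (trips indexed 0..N-1). *)

definition Tobs :: "('a \<Rightarrow> 'w \<Rightarrow> real) \<Rightarrow> (nat \<Rightarrow> 'a \<Rightarrow> 'w \<Rightarrow> real) \<Rightarrow> nat \<Rightarrow> 'a \<Rightarrow> 'w \<Rightarrow> real" where
  "Tobs \<theta> \<epsilon> n s \<omega> = \<theta> s \<omega> + \<epsilon> n s \<omega>"

definition Ncnt :: "(nat \<Rightarrow> 'a set) \<Rightarrow> nat \<Rightarrow> 'a set \<Rightarrow> nat" where
  "Ncnt yr N S = card {n. n < N \<and> S \<subseteq> yr n}"

definition int_risk :: "'w measure \<Rightarrow> ('w \<Rightarrow> real) \<Rightarrow> ('a \<Rightarrow> 'w \<Rightarrow> real) \<Rightarrow> 'a set \<Rightarrow> real" where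
  "int_risk M est \<theta> y = (\<integral>\<omega>. (est \<omega> - (\<Sum>s\<in>y. \<theta> s \<omega>))^2 \<partial>M)"

definition seg_est :: "(nat \<Rightarrow> 'a set) \<Rightarrow> nat \<Rightarrow> ('a \<Rightarrow> 'w \<Rightarrow> real) \<Rightarrow> (nat \<Rightarrow> 'a \<Rightarrow> 'w \<Rightarrow> real)
    \<Rightarrow> real \<Rightarrow> 'a set set \<Rightarrow> ('a set \<Rightarrow> real) \<Rightarrow> 'w \<Rightarrow> real" where
  "seg_est yr N \<theta> \<epsilon> \<mu> P \<phi> \<omega> =
     (\<Sum>S\<in>P. (1 - \<phi> S) * real (card S) * \<mu>
        + \<phi> S * (\<Sum>n\<in>{n. n < N \<and> S \<subseteq> yr n}. \<Sum>s\<in>S. Tobs \<theta> \<epsilon> n s \<omega>) / real (Ncnt yr N S))"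

definition seg_system :: "(nat \<Rightarrow> 'a set) \<Rightarrow> nat \<Rightarrow> ('a \<Rightarrow> 'a \<Rightarrow> real) \<Rightarrow> real \<Rightarrow> 'a set set
    \<Rightarrow> ('a set \<Rightarrow> real) \<Rightarrow> bool" where
  "seg_system yr N \<sigma> \<tau> P \<phi> \<longleftrightarrow>
     (\<forall>S\<in>P. (\<Sum>T\<in>P. real (Ncnt yr N (S \<union> T)) / (real (Ncnt yr N S) * real (Ncnt yr N T))
                 * \<phi> T * (\<Sum>s\<in>S. \<Sum>t\<in>T. \<sigma> s t))
             + (\<phi> S - 1) * real (card S) * \<tau>^2 = 0)"

definition Mcnt :: "(nat \<Rightarrow> 'a set) \<Rightarrow> nat \<Rightarrow> 'a set set \<Rightarrow> nat" where
  "Mcnt yr N \<delta> = card {n. n < N \<and> yr n \<in> \<delta>}"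

definition Ndelta :: "(nat \<Rightarrow> 'a set) \<Rightarrow> nat \<Rightarrow> 'a set set \<Rightarrow> 'a \<Rightarrow> nat" where
  "Ndelta yr N \<delta> s = card {n. n < N \<and> yr n \<in> \<delta> \<and> s \<in> yr n}"

definition ybar :: "(nat \<Rightarrow> 'a set) \<Rightarrow> nat \<Rightarrow> 'a set set \<Rightarrow> real" where
  "ybar yr N \<delta> = (\<Sum>n\<in>{n. n < N \<and> yr n \<in> \<delta>}. real (card (yr n))) / real (Mcnt yr N \<delta>)"

definition route_est :: "(nat \<Rightarrow> 'a set) \<Rightarrow> nat \<Rightarrow> ('a \<Rightarrow> 'w \<Rightarrow> real) \<Rightarrow> (nat \<Rightarrow> 'a \<Rightarrow> 'w \<Rightarrow> real)
    \<Rightarrow> real \<Rightarrow> 'a set set \<Rightarrow> 'a set \<Rightarrow> real \<Rightarrow> 'w \<Rightarrow> real" where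
  "route_est yr N \<theta> \<epsilon> \<mu> \<delta> y \<phi> \<omega> =
     (1 - \<phi>) * real (card y) * \<mu>
     + \<phi> * (\<Sum>n\<in>{n. n < N \<and> yr n \<in> \<delta>}. \<Sum>s\<in>yr n. Tobs \<theta> \<epsilon> n s \<omega>) / real (Mcnt yr N \<delta>)"

definition phi_route :: "(nat \<Rightarrow> 'a set) \<Rightarrow> nat \<Rightarrow> ('a \<Rightarrow> 'a \<Rightarrow> real) \<Rightarrow> real \<Rightarrow> real
    \<Rightarrow> 'a set set \<Rightarrow> 'a set \<Rightarrow> real" where
  "phi_route yr N \<sigma> \<mu> \<tau> \<delta> y =
     (let M = real (Mcnt yr N \<delta>) in
      (\<Sum>s\<in>y. real (Ndelta yr N \<delta> s)) * \<tau>^2 /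
      ((\<Sum>s\<in>\<Union>\<delta>. real (Ndelta yr N \<delta> s)^2 / M) * \<tau>^2
       + (\<Sum>n\<in>{n. n < N \<and> yr n \<in> \<delta>}. \<Sum>s\<in>yr n. \<Sum>t\<in>yr n. \<sigma> s t) / M
       + M * \<mu>^2 * (ybar yr N \<delta> - real (card y))^2))"

end

theory Submission
  imports Defs
begin

text \<open>
  Write \<open>\<theta> s = \<mu> + u s\<close>. The errors of both estimators are affine combinations of the centred
  prior deviations \<open>u s\<close> and the trip errors \<open>\<epsilon> n s\<close>, and the independence hypotheses give
  all their second moments: \<open>E[u s * u t] = \<tau>\<^sup>2 [s = t]\<close>, \<open>E[\<epsilon> n s * \<epsilon> n' t] = [n = n'] \<sigma> s t\<close>
  and \<open>E[u s * \<epsilon> n t] = 0\<close>. Hence the integrated risk of the segment-based estimator is the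
  quadratic \<open>\<phi>\<^sup>T C \<phi> + (\<Sum>S. |S| \<tau>\<^sup>2 (\<phi> S - 1)\<^sup>2)\<close>, where \<open>C\<close> is the Gram matrix of the averaged
  errors on the super-segments. As \<open>C\<close> is positive semidefinite and \<open>\<tau>\<^sup>2 > 0\<close>, its Hessian is
  positive definite, so the normal equations, which are the stated linear system, have a unique
  solution, and it is the unique minimizer. For the route-based estimator the error is
  \<open>\<phi> W - Y\<close>, so the risk \<open>\<phi>\<^sup>2 E[W\<^sup>2] - 2 \<phi> E[W Y] + E[Y\<^sup>2]\<close> is minimized at
  \<open>E[W Y] / E[W\<^sup>2]\<close>, which is the given weight.
\<close>

section \<open>Quadratic forms over finite index sets\<close>

lemma sum_if_mem_subset:
  assumes "finite X" "S \<subseteq> X"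
  shows "(\<Sum>s\<in>X. if s \<in> S then f s else 0) = sum f S"
  using sum.inter_restrict[OF assms(1), of f S] assms(2) by (simp add: Int_absorb1)

lemma double_sum_if_mem_subset:
  fixes a b :: real
  assumes "finite X" "S \<subseteq> X" "T \<subseteq> X"
  shows "(\<Sum>s\<in>X. \<Sum>t\<in>X. (if s \<in> S then a else 0) * (if t \<in> T then b else 0) * f s t)
       = a * b * (\<Sum>s\<in>S. \<Sum>t\<in>T. f s t)"
proof -
  have "(\<Sum>s\<in>X. \<Sum>t\<in>X. (if s \<in> S then a else 0) * (if t \<in> T then b else 0) * f s t)
      = (\<Sum>s\<in>X. if s \<in> S then (\<Sum>t\<in>X. if t \<in> T then a * b * f s t else 0) else 0)"
    by (intro sum.cong) (auto intro!: sum.cong)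
  also have "\<dots> = (\<Sum>s\<in>S. \<Sum>t\<in>T. a * b * f s t)"
    using assms by (simp add: sum_if_mem_subset)
  finally show ?thesis
    by (simp add: sum_distrib_left)
qed

lemma sum_sum_subsets_count:
  fixes f :: "'a \<Rightarrow> real"
  assumes "finite A" "finite S" "\<And>n. n \<in> A \<Longrightarrow> Y n \<subseteq> S"
  shows "(\<Sum>n\<in>A. \<Sum>s\<in>Y n. f s) = (\<Sum>s\<in>S. real (card {n\<in>A. s \<in> Y n}) * f s)"
proof -
  have "(\<Sum>n\<in>A. \<Sum>s\<in>Y n. f s) = (\<Sum>n\<in>A. \<Sum>s\<in>S. if s \<in> Y n then f s else 0)"
    using assms by (simp add: sum_if_mem_subset)
  also have "\<dots> = (\<Sum>s\<in>S. \<Sum>n\<in>A. if s \<in> Y n then f s else 0)"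
    by (rule sum.swap)
  also have "\<dots> = (\<Sum>s\<in>S. real (card {n\<in>A. s \<in> Y n}) * f s)"
    using assms by (simp add: sum.If_cases Int_def)
  finally show ?thesis .
qed

definition quad_form :: "'i set \<Rightarrow> ('i \<Rightarrow> 'i \<Rightarrow> real) \<Rightarrow> ('i \<Rightarrow> real) \<Rightarrow> real" where
  "quad_form P A x = (\<Sum>S\<in>P. \<Sum>T\<in>P. x S * A S T * x T)"

lemma quad_form_cong: "(\<And>S. S \<in> P \<Longrightarrow> x S = y S) \<Longrightarrow> quad_form P A x = quad_form P A y"
  by (simp add: quad_form_def)

lemma quad_form_insert:
  assumes "finite P" "a \<notin> P"
  shows "quad_form (insert a P) A x
    = x a * A a a * x a + x a * (\<Sum>T\<in>P. A a T * x T) + (\<Sum>S\<in>P. x S * A S a) * x a + quad_form P A x"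
  using assms by (simp add: quad_form_def sum.distrib sum_distrib_left sum_distrib_right mult.assoc)

lemma quad_form_schur_complement:
  "quad_form P (\<lambda>S T. A S T - A S a * A a T / c) x
    = quad_form P A x - (\<Sum>S\<in>P. x S * A S a) * (\<Sum>T\<in>P. A a T * x T) / c"
proof -
  have "x S * (A S T - A S a * A a T / c) * x T = x S * A S T * x T - (x S * A S a) * (A a T * x T) / c"
    for S T
    by (simp add: algebra_simps)
  then show ?thesis
    by (simp add: quad_form_def sum_subtractf sum_product sum_divide_distrib)
qed

definition pos_def_on :: "'i set \<Rightarrow> ('i \<Rightarrow> 'i \<Rightarrow> real) \<Rightarrow> bool" where
  "pos_def_on P A \<longleftrightarrow> (\<forall>x. (\<exists>S\<in>P. x S \<noteq> 0) \<longrightarrow> 0 < quad_form P A x)"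

lemma pos_def_on_nonneg: "pos_def_on P A \<Longrightarrow> 0 \<le> quad_form P A x"
  by (cases "\<exists>S\<in>P. x S \<noteq> 0") (auto simp: pos_def_on_def quad_form_def intro: less_imp_le)

lemma pos_def_on_diag_pos:
  assumes "finite P" "pos_def_on P A" "a \<in> P"
  shows "0 < A a a"
proof -
  define e where "e S = (if S = a then 1 else 0 :: real)" for S
  have "quad_form P A e = (\<Sum>S\<in>P. if S = a then (\<Sum>T\<in>P. if T = a then A S T else 0) else 0)"
    by (auto simp: quad_form_def e_def intro!: sum.cong)
  also have "\<dots> = A a a"
    using assms(1,3) by (simp add: sum.delta)
  finally have "quad_form P A e = A a a" .
  moreover have "0 < quad_form P A e"
    using assms(3) by (intro assms(2)[unfolded pos_def_on_def, rule_format]) (auto simp: e_def)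
  ultimately show ?thesis
    by simp
qed

lemma pos_def_on_schur_complement:
  fixes A :: "'i \<Rightarrow> 'i \<Rightarrow> real"
  assumes "finite P" "a \<notin> P" and A_sym: "\<forall>S\<in>insert a P. \<forall>T\<in>insert a P. A S T = A T S"
    and pd: "pos_def_on (insert a P) A"
  shows "pos_def_on P (\<lambda>S T. A S T - A S a * A a T / A a a)"
  unfolding pos_def_on_def
proof (intro allI impI)
  fix x :: "'i \<Rightarrow> real"
  assume nz: "\<exists>S\<in>P. x S \<noteq> 0"
  have "0 < A a a"
    using pos_def_on_diag_pos[OF _ pd] assms(1) by simp
  define r where "r = (\<Sum>T\<in>P. A a T * x T)"
  have "A S a = A a S" if "S \<in> P" for S
    using that by (intro A_sym[rule_format]) auto
  then have r': "(\<Sum>S\<in>P. x S * A S a) = r"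
    unfolding r_def by (intro sum.cong) auto
  \<comment> \<open>extend \<open>x\<close> by the value at \<open>a\<close> that minimizes the quadratic form\<close>
  define z where "z = x(a := - r / A a a)"
  obtain S where "S \<in> P" "x S \<noteq> 0"
    using nz by blast
  then have "\<exists>S\<in>insert a P. z S \<noteq> 0"
    using assms(2) by (auto simp: z_def)
  then have "0 < quad_form (insert a P) A z"
    by (rule pd[unfolded pos_def_on_def, rule_format])
  also have "\<dots> = quad_form P A x - r * r / A a a"
  proof -
    have "quad_form P A z = quad_form P A x"
      using assms(2) by (intro quad_form_cong) (auto simp: z_def)
    moreover have "(\<Sum>T\<in>P. A a T * z T) = r"
      using assms(2) by (auto simp: r_def z_def intro!: sum.cong)
    moreover have "(\<Sum>S\<in>P. z S * A S a) = r"
      unfolding r'[symmetric] using assms(2) by (auto simp: z_def intro!: sum.cong)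
    ultimately show ?thesis
      using assms(1,2) \<open>0 < A a a\<close> by (simp add: quad_form_insert z_def field_simps)
  qed
  also have "\<dots> = quad_form P (\<lambda>S T. A S T - A S a * A a T / A a a) x"
    by (simp add: quad_form_schur_complement r' r_def)
  finally show "0 < quad_form P (\<lambda>S T. A S T - A S a * A a T / A a a) x" .
qed

lemma pos_def_system_solvable:
  fixes A :: "'i \<Rightarrow> 'i \<Rightarrow> real"
  assumes "finite P" "\<forall>S\<in>P. \<forall>T\<in>P. A S T = A T S" "pos_def_on P A"
  shows "\<exists>x. \<forall>S\<in>P. (\<Sum>T\<in>P. A S T * x T) = b S"
  using assms
proof (induction P arbitrary: A b rule: finite_induct)
  case empty
  then show ?case by simp
next
  case (insert a P)
  define \<alpha> where "\<alpha> = A a a"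
  have "0 < \<alpha>"
    using pos_def_on_diag_pos[OF _ insert.prems(2)] insert.hyps(1) by (simp add: \<alpha>_def)
  \<comment> \<open>Gaussian elimination of the unknown at \<open>a\<close>\<close>
  define A' where "A' = (\<lambda>S T. A S T - A S a * A a T / \<alpha>)"
  have "A S T = A T S" if "S \<in> insert a P" "T \<in> insert a P" for S T
    using insert.prems(1) that by blast
  then have A'_sym: "\<forall>S\<in>P. \<forall>T\<in>P. A' S T = A' T S"
    by (auto simp: A'_def)
  have A'_pd: "pos_def_on P A'"
    unfolding A'_def \<alpha>_def by (rule pos_def_on_schur_complement[OF insert.hyps insert.prems])
  obtain y where y: "\<forall>S\<in>P. (\<Sum>T\<in>P. A' S T * y T) = b S - A S a * b a / \<alpha>"
    using insert.IH[OF A'_sym A'_pd, of "\<lambda>S. b S - A S a * b a / \<alpha>"] by blast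
  define x where "x = y(a := (b a - (\<Sum>T\<in>P. A a T * y T)) / \<alpha>)"
  have "(\<Sum>T\<in>insert a P. A S T * x T) = b S" if S: "S \<in> insert a P" for S
  proof -
    have sum_x: "(\<Sum>T\<in>insert a P. A S T * x T) = A S a * x a + (\<Sum>T\<in>P. A S T * y T)"
      using insert.hyps by (auto simp: x_def intro!: sum.cong)
    show ?thesis
    proof (cases "S = a")
      case True
      then show ?thesis using sum_x \<open>0 < \<alpha>\<close> by (simp add: x_def \<alpha>_def[symmetric])
    next
      case False
      then have "(\<Sum>T\<in>P. A S T * y T) - A S a / \<alpha> * (\<Sum>T\<in>P. A a T * y T) = b S - A S a * b a / \<alpha>"
        using y S by (simp add: A'_def left_diff_distrib sum_subtractf sum_distrib_left mult.assoc)
      then show ?thesis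
        using sum_x \<open>0 < \<alpha>\<close> by (simp add: x_def field_simps)
    qed
  qed
  then show ?case by blast
qed

lemma quad_form_expand_at_solution:
  assumes "\<forall>S\<in>P. \<forall>T\<in>P. A S T = A T S" and "\<forall>S\<in>P. (\<Sum>T\<in>P. A S T * \<phi> T) = b S"
  shows "quad_form P A \<psi> - 2 * (\<Sum>S\<in>P. \<psi> S * b S)
    = quad_form P A \<phi> - 2 * (\<Sum>S\<in>P. \<phi> S * b S) + quad_form P A (\<lambda>S. \<psi> S - \<phi> S)"
proof -
  define h where "h S = \<psi> S - \<phi> S" for S
  have cross: "(\<Sum>S\<in>P. \<Sum>T\<in>P. h S * A S T * \<phi> T) = (\<Sum>S\<in>P. h S * b S)"
    using assms(2) by (simp add: mult.assoc sum_distrib_left[symmetric])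
  have "(\<Sum>S\<in>P. \<Sum>T\<in>P. \<phi> S * A S T * h T) = (\<Sum>T\<in>P. \<Sum>S\<in>P. h T * A T S * \<phi> S)"
    using assms(1) by (subst sum.swap) (auto intro!: sum.cong)
  then have cross': "(\<Sum>S\<in>P. \<Sum>T\<in>P. \<phi> S * A S T * h T) = (\<Sum>S\<in>P. h S * b S)"
    using cross by simp
  have "quad_form P A \<psi> = quad_form P A \<phi> + (\<Sum>S\<in>P. \<Sum>T\<in>P. \<phi> S * A S T * h T)
      + (\<Sum>S\<in>P. \<Sum>T\<in>P. h S * A S T * \<phi> T) + quad_form P A h"
    unfolding quad_form_def by (simp add: h_def algebra_simps sum.distrib sum_subtractf)
  then show ?thesis
    unfolding cross cross' by (simp add: h_def[abs_def] algebra_simps sum_subtractf)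
qed

lemma pos_def_quadratic_unique_minimizer:
  assumes "finite P" "\<forall>S\<in>P. \<forall>T\<in>P. A S T = A T S" "pos_def_on P A"
  shows "\<exists>\<phi>s. (\<forall>S\<in>P. (\<Sum>T\<in>P. A S T * \<phi>s T) = b S)
    \<and> (\<forall>\<psi>. (\<forall>S\<in>P. (\<Sum>T\<in>P. A S T * \<psi> T) = b S) \<longrightarrow> (\<forall>S\<in>P. \<psi> S = \<phi>s S))
    \<and> (\<forall>\<phi>. (\<forall>\<phi>'. quad_form P A \<phi> - 2 * (\<Sum>S\<in>P. \<phi> S * b S) \<le> quad_form P A \<phi>' - 2 * (\<Sum>S\<in>P. \<phi>' S * b S))
            \<longleftrightarrow> (\<forall>S\<in>P. \<phi> S = \<phi>s S))"
proof -
  define F where "F \<phi> = quad_form P A \<phi> - 2 * (\<Sum>S\<in>P. \<phi> S * b S)" for \<phi>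
  have shift: "F \<psi> = F \<phi> + quad_form P A (\<lambda>S. \<psi> S - \<phi> S)"
    if "\<forall>S\<in>P. (\<Sum>T\<in>P. A S T * \<phi> T) = b S" for \<phi> \<psi>
    unfolding F_def by (rule quad_form_expand_at_solution[OF assms(2) that])
  have minimal: "F \<phi> \<le> F \<psi>" if "\<forall>S\<in>P. (\<Sum>T\<in>P. A S T * \<phi> T) = b S" for \<phi> \<psi>
    using shift[OF that, of \<psi>] pos_def_on_nonneg[OF assms(3)] by simp
  obtain \<phi>s where sol: "\<forall>S\<in>P. (\<Sum>T\<in>P. A S T * \<phi>s T) = b S"
    using pos_def_system_solvable[OF assms] by blast
  have minimizer_iff: "(\<forall>\<phi>'. F \<phi> \<le> F \<phi>') \<longleftrightarrow> (\<forall>S\<in>P. \<phi> S = \<phi>s S)" for \<phi>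
  proof
    assume "\<forall>\<phi>'. F \<phi> \<le> F \<phi>'"
    then have "F \<phi> \<le> F \<phi>s" ..
    then have "quad_form P A (\<lambda>S. \<phi> S - \<phi>s S) \<le> 0"
      using shift[OF sol, of \<phi>] by linarith
    show "\<forall>S\<in>P. \<phi> S = \<phi>s S"
    proof (rule ccontr)
      assume "\<not> (\<forall>S\<in>P. \<phi> S = \<phi>s S)"
      then have "\<exists>S\<in>P. \<phi> S - \<phi>s S \<noteq> 0"
        by auto
      then have "0 < quad_form P A (\<lambda>S. \<phi> S - \<phi>s S)"
        by (rule assms(3)[unfolded pos_def_on_def, rule_format])
      with \<open>quad_form P A (\<lambda>S. \<phi> S - \<phi>s S) \<le> 0\<close> show False
        by simp
    qed
  next
    assume "\<forall>S\<in>P. \<phi> S = \<phi>s S"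
    then have "F \<phi> = F \<phi>s"
      using shift[OF sol, of \<phi>] by (simp add: quad_form_def)
    then show "\<forall>\<phi>'. F \<phi> \<le> F \<phi>'"
      using minimal[OF sol] by simp
  qed
  have "\<forall>S\<in>P. \<psi> S = \<phi>s S" if "\<forall>S\<in>P. (\<Sum>T\<in>P. A S T * \<psi> T) = b S" for \<psi>
    using minimizer_iff[of \<psi>] minimal[OF that] by blast
  with sol minimizer_iff show ?thesis
    unfolding F_def[symmetric] by blast
qed

lemma sum_add_diag_mult:
  fixes C :: "'i \<Rightarrow> 'i \<Rightarrow> real"
  assumes "finite P" "S \<in> P"
  shows "(\<Sum>T\<in>P. (C S T + (if S = T then d S else 0)) * x T) = (\<Sum>T\<in>P. C S T * x T) + d S * x S"
proof -
  have "(\<Sum>T\<in>P. (C S T + (if S = T then d S else 0)) * x T)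
      = (\<Sum>T\<in>P. C S T * x T + (if T = S then d S * x S else 0))"
    by (intro sum.cong) (auto simp: distrib_right)
  then show ?thesis
    using assms by (simp add: sum.distrib)
qed

lemma quad_form_add_diag:
  fixes C :: "'i \<Rightarrow> 'i \<Rightarrow> real"
  assumes "finite P"
  shows "quad_form P (\<lambda>S T. C S T + (if S = T then d S else 0)) x
    = quad_form P C x + (\<Sum>S\<in>P. (x S)\<^sup>2 * d S)"
proof -
  have "quad_form P (\<lambda>S T. C S T + (if S = T then d S else 0)) x
      = (\<Sum>S\<in>P. x S * (\<Sum>T\<in>P. (C S T + (if S = T then d S else 0)) * x T))"
    by (simp add: quad_form_def sum_distrib_left mult.assoc)
  also have "\<dots> = (\<Sum>S\<in>P. x S * ((\<Sum>T\<in>P. C S T * x T) + d S * x S))"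
    using assms by (intro sum.cong refl) (simp add: sum_add_diag_mult)
  finally show ?thesis
    by (simp add: quad_form_def sum.distrib sum_distrib_left algebra_simps power2_eq_square)
qed

lemma pos_def_on_add_diag:
  fixes C :: "'i \<Rightarrow> 'i \<Rightarrow> real"
  assumes "finite P" "\<forall>x. 0 \<le> quad_form P C x" "\<forall>S\<in>P. 0 < d S"
  shows "pos_def_on P (\<lambda>S T. C S T + (if S = T then d S else 0))"
  unfolding pos_def_on_def quad_form_add_diag[OF assms(1)]
proof (intro allI impI)
  fix x :: "'i \<Rightarrow> real"
  assume "\<exists>S\<in>P. x S \<noteq> 0"
  then obtain S where "S \<in> P" "x S \<noteq> 0" ..
  then have "0 < (\<Sum>S\<in>P. (x S)\<^sup>2 * d S)"
    using assms(1,3) by (intro sum_pos2[of P S]) (auto intro: less_imp_le)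
  then show "0 < quad_form P C x + (\<Sum>S\<in>P. (x S)\<^sup>2 * d S)"
    using assms(2) by (simp add: add_nonneg_pos)
qed

lemma penalized_quadratic_unique_minimizer:
  fixes C :: "'i \<Rightarrow> 'i \<Rightarrow> real" and d :: "'i \<Rightarrow> real"
    and R :: "('i \<Rightarrow> real) \<Rightarrow> real" and sys :: "('i \<Rightarrow> real) \<Rightarrow> bool"
  assumes fin: "finite P" and C_sym: "\<forall>S\<in>P. \<forall>T\<in>P. C S T = C T S"
    and psd: "\<forall>x. 0 \<le> quad_form P C x" and dpos: "\<forall>S\<in>P. 0 < d S"
    and R_eq: "\<And>\<phi>. R \<phi> = quad_form P C \<phi> + (\<Sum>S\<in>P. (\<phi> S - 1)\<^sup>2 * d S)"
    and sys_iff: "\<And>\<phi>. sys \<phi> \<longleftrightarrow> (\<forall>S\<in>P. (\<Sum>T\<in>P. C S T * \<phi> T) + (\<phi> S - 1) * d S = 0)"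
  shows "\<exists>\<phi>s. sys \<phi>s \<and> (\<forall>\<psi>. sys \<psi> \<longrightarrow> (\<forall>S\<in>P. \<psi> S = \<phi>s S))
            \<and> (\<forall>\<phi>. (\<forall>\<phi>'. R \<phi> \<le> R \<phi>') \<longleftrightarrow> (\<forall>S\<in>P. \<phi> S = \<phi>s S))"
proof -
  define A where "A = (\<lambda>S T. C S T + (if S = T then d S else 0))"
  have "((\<Sum>T\<in>P. C S T * \<psi> T) + (\<psi> S - 1) * d S = 0) \<longleftrightarrow> ((\<Sum>T\<in>P. A S T * \<psi> T) = d S)"
    if "S \<in> P" for S \<psi>
    unfolding A_def sum_add_diag_mult[OF fin that] by (simp add: algebra_simps)
  then have sys_A: "sys \<psi> \<longleftrightarrow> (\<forall>S\<in>P. (\<Sum>T\<in>P. A S T * \<psi> T) = d S)" for \<psi>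
    unfolding sys_iff by blast
  have R_A: "R \<psi> = quad_form P A \<psi> - 2 * (\<Sum>S\<in>P. \<psi> S * d S) + (\<Sum>S\<in>P. d S)" for \<psi>
    unfolding R_eq A_def quad_form_add_diag[OF fin]
    by (simp add: power2_diff algebra_simps sum.distrib sum_subtractf sum_distrib_left)
  have "A S T = A T S" if "S \<in> P" "T \<in> P" for S T
    unfolding A_def using C_sym[rule_format, OF that] by simp
  then have A_sym: "\<forall>S\<in>P. \<forall>T\<in>P. A S T = A T S"
    by blast
  have A_pd: "pos_def_on P A"
    unfolding A_def by (rule pos_def_on_add_diag[OF fin psd dpos])
  show ?thesis
    unfolding sys_A R_A using pos_def_quadratic_unique_minimizer[OF fin A_sym A_pd, of d] by simp
qed

lemma quadratic_vertex_le:
  fixes a b c x :: real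
  assumes "0 < a"
  shows "(b / a)\<^sup>2 * a - 2 * (b / a) * b + c \<le> x\<^sup>2 * a - 2 * x * b + c"
proof -
  have "x\<^sup>2 * a - 2 * x * b - ((b / a)\<^sup>2 * a - 2 * (b / a) * b) = a * (x - b / a)\<^sup>2"
    using assms by (simp add: field_simps power2_eq_square)
  moreover have "0 \<le> a * (x - b / a)\<^sup>2"
    using assms by simp
  ultimately show ?thesis
    by linarith
qed

section \<open>Independence and square integrability\<close>

lemma (in prob_space) indep_set_mono:
  assumes "indep_set A B" "A' \<subseteq> A" "B' \<subseteq> B"
  shows "indep_set A' B'"
  using assms indep_setD[OF assms(1)] indep_setD_ev1[OF assms(1)] indep_setD_ev2[OF assms(1)]
  by (intro indep_setI) auto

lemma preimages_component_subset:
  fixes X :: "'i \<Rightarrow> 'w \<Rightarrow> 'b::topological_space"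
  assumes "i \<in> I"
  shows "{X i -` A \<inter> space M | A. A \<in> sets borel}
    \<subseteq> {(\<lambda>\<omega>. restrict (\<lambda>j. X j \<omega>) I) -` B \<inter> space M | B. B \<in> sets (PiM I (\<lambda>_. borel))}"
proof safe
  fix A :: "'b set"
  assume "A \<in> sets borel"
  then have "(\<lambda>f. f i) -` A \<inter> space (PiM I (\<lambda>_. borel)) \<in> sets (PiM I (\<lambda>_. borel))"
    using assms by (intro measurable_sets[OF measurable_component_singleton])
  moreover have "X i -` A \<inter> space M
      = (\<lambda>\<omega>. restrict (\<lambda>j. X j \<omega>) I) -` ((\<lambda>f. f i) -` A \<inter> space (PiM I (\<lambda>_. borel))) \<inter> space M"
    using assms by (auto simp: space_PiM)
  ultimately show "\<exists>B. X i -` A \<inter> space M = (\<lambda>\<omega>. restrict (\<lambda>j. X j \<omega>) I) -` B \<inter> space M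
      \<and> B \<in> sets (PiM I (\<lambda>_. borel))"
    by blast
qed

lemma (in prob_space) indep_var_of_indep_set:
  assumes "random_variable S X" "random_variable T Y"
    and "indep_set {X -` A \<inter> space M | A. A \<in> sets S} {Y -` A \<inter> space M | A. A \<in> sets T}"
  shows "indep_var S X T Y"
proof -
  have "(\<lambda>i. {case_bool X Y i -` A \<inter> space M |A. A \<in> sets (case_bool S T i)})
     = case_bool {X -` A \<inter> space M | A. A \<in> sets S} {Y -` A \<inter> space M | A. A \<in> sets T}"
    by (rule ext) (simp split: bool.split)
  then show ?thesis
    unfolding indep_var_def indep_vars_def2 using assms
    by (auto simp: indep_set_def split: bool.split)
qed

lemma (in prob_space) indep_vars_imp_indep_var:
  assumes "indep_vars M' X I" "i \<in> I" "j \<in> I" "i \<noteq> j"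
  shows "indep_var (M' i) (X i) (M' j) (X j)"
proof -
  have "indep_var (M' i) ((\<lambda>f. f i) \<circ> (\<lambda>\<omega>. restrict (\<lambda>k. X k \<omega>) {i}))
                  (M' j) ((\<lambda>f. f j) \<circ> (\<lambda>\<omega>. restrict (\<lambda>k. X k \<omega>) {j}))"
    using assms by (intro indep_var_compose[OF indep_var_restrict[OF assms(1)]])
      (auto intro!: measurable_component_singleton)
  then show ?thesis by (simp add: comp_def)
qed

lemma (in prob_space) indep_var_components:
  assumes "indep_var (PiM I (\<lambda>_. borel)) (\<lambda>\<omega>. restrict (\<lambda>i. X i \<omega>) I)
                     (PiM J (\<lambda>_. borel)) (\<lambda>\<omega>. restrict (\<lambda>j. Y j \<omega>) J)"
    and "i \<in> I" "j \<in> J"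
  shows "indep_var borel (X i) borel (Y j)"
proof -
  have "indep_var borel ((\<lambda>f. f i) \<circ> (\<lambda>\<omega>. restrict (\<lambda>i. X i \<omega>) I))
                  borel ((\<lambda>f. f j) \<circ> (\<lambda>\<omega>. restrict (\<lambda>j. Y j \<omega>) J))"
    using assms by (intro indep_var_compose) (auto intro!: measurable_component_singleton)
  then show ?thesis using assms by (simp add: comp_def)
qed

definition square_integrable :: "'w measure \<Rightarrow> ('w \<Rightarrow> real) \<Rightarrow> bool" where
  "square_integrable M f \<longleftrightarrow> f \<in> borel_measurable M \<and> integrable M (\<lambda>\<omega>. (f \<omega>)\<^sup>2)"

lemma square_integrable_mult:
  assumes "square_integrable M f" "square_integrable M g"
  shows "integrable M (\<lambda>\<omega>. f \<omega> * g \<omega>)"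
proof (rule Bochner_Integration.integrable_bound)
  show "integrable M (\<lambda>\<omega>. (f \<omega>)\<^sup>2 + (g \<omega>)\<^sup>2)"
    using assms by (auto simp: square_integrable_def)
  show "(\<lambda>\<omega>. f \<omega> * g \<omega>) \<in> borel_measurable M"
    using assms by (auto simp: square_integrable_def)
  have "\<bar>f \<omega> * g \<omega>\<bar> \<le> (f \<omega>)\<^sup>2 + (g \<omega>)\<^sup>2" for \<omega>
  proof -
    have "2 * \<bar>f \<omega>\<bar> * \<bar>g \<omega>\<bar> \<le> (f \<omega>)\<^sup>2 + (g \<omega>)\<^sup>2"
      using sum_squares_bound[of "\<bar>f \<omega>\<bar>" "\<bar>g \<omega>\<bar>"] by simp
    moreover have "0 \<le> \<bar>f \<omega>\<bar> * \<bar>g \<omega>\<bar>" by simp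
    ultimately show ?thesis unfolding abs_mult by linarith
  qed
  then show "AE \<omega> in M. norm (f \<omega> * g \<omega>) \<le> norm ((f \<omega>)\<^sup>2 + (g \<omega>)\<^sup>2)"
    by simp
qed

lemma square_integrable_add:
  "square_integrable M f \<Longrightarrow> square_integrable M g \<Longrightarrow> square_integrable M (\<lambda>\<omega>. f \<omega> + g \<omega>)"
  using square_integrable_mult[of M f g]
  by (auto simp: square_integrable_def power2_sum mult.assoc
      intro!: Bochner_Integration.integrable_add integrable_mult_right)

lemma square_integrable_cmult:
  "square_integrable M f \<Longrightarrow> square_integrable M (\<lambda>\<omega>. c * f \<omega>)"
  by (auto simp: square_integrable_def power_mult_distrib)

lemma square_integrable_sum:
  "(\<And>i. i \<in> I \<Longrightarrow> square_integrable M (f i)) \<Longrightarrow> square_integrable M (\<lambda>\<omega>. \<Sum>i\<in>I. f i \<omega>)"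
  by (induction I rule: infinite_finite_induct)
     (simp_all add: square_integrable_def square_integrable_add[unfolded square_integrable_def])

lemma (in finite_measure) square_integrable_const: "square_integrable M (\<lambda>_. c)"
  by (simp add: square_integrable_def)

lemma (in finite_measure) integrable_if_square_integrable:
  "square_integrable M f \<Longrightarrow> integrable M f"
  by (simp add: square_integrable_def square_integrable_imp_integrable)

lemma integral_sum_mult_sum:
  assumes "finite I" "finite J"
    and "\<And>i. i \<in> I \<Longrightarrow> square_integrable M (f i)" "\<And>j. j \<in> J \<Longrightarrow> square_integrable M (g j)"
  shows "(\<integral>\<omega>. (\<Sum>i\<in>I. f i \<omega>) * (\<Sum>j\<in>J. g j \<omega>) \<partial>M) = (\<Sum>i\<in>I. \<Sum>j\<in>J. \<integral>\<omega>. f i \<omega> * g j \<omega> \<partial>M)"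
  unfolding sum_product using assms
  by (simp add: Bochner_Integration.integral_sum Bochner_Integration.integrable_sum square_integrable_mult)

lemma integral_mult_sum:
  assumes "finite J" "square_integrable M f" "\<And>j. j \<in> J \<Longrightarrow> square_integrable M (g j)"
  shows "(\<integral>\<omega>. f \<omega> * (\<Sum>j\<in>J. g j \<omega>) \<partial>M) = (\<Sum>j\<in>J. \<integral>\<omega>. f \<omega> * g j \<omega> \<partial>M)"
  using assms by (simp add: sum_distrib_left square_integrable_mult)

lemma integral_cmult_mult_cmult:
  fixes f g :: "'w \<Rightarrow> real"
  shows "(\<integral>\<omega>. (p * f \<omega>) * (q * g \<omega>) \<partial>M) = p * q * (\<integral>\<omega>. f \<omega> * g \<omega> \<partial>M)"
  by (simp add: mult_ac)

lemma integral_scaled_diff_square: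
  assumes "square_integrable M W" "square_integrable M Y"
  shows "(\<integral>\<omega>. (p * W \<omega> - Y \<omega>)\<^sup>2 \<partial>M)
     = p\<^sup>2 * (\<integral>\<omega>. W \<omega> * W \<omega> \<partial>M) - 2 * p * (\<integral>\<omega>. W \<omega> * Y \<omega> \<partial>M) + (\<integral>\<omega>. Y \<omega> * Y \<omega> \<partial>M)"
proof -
  have "(\<lambda>\<omega>. (p * W \<omega> - Y \<omega>)\<^sup>2) = (\<lambda>\<omega>. p\<^sup>2 * (W \<omega> * W \<omega>) - 2 * p * (W \<omega> * Y \<omega>) + Y \<omega> * Y \<omega>)"
    by (auto simp: fun_eq_iff power2_eq_square algebra_simps)
  then show ?thesis
    using assms by (simp add: square_integrable_mult)
qed

lemma quad_form_gram_nonneg: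
  assumes "finite P" "\<And>S. S \<in> P \<Longrightarrow> square_integrable M (V S)"
  shows "0 \<le> quad_form P (\<lambda>S T. \<integral>\<omega>. V S \<omega> * V T \<omega> \<partial>M) x"
proof -
  have "0 \<le> (\<integral>\<omega>. (\<Sum>S\<in>P. x S * V S \<omega>) * (\<Sum>T\<in>P. x T * V T \<omega>) \<partial>M)"
    by (intro integral_nonneg_AE) auto
  also have "\<dots> = quad_form P (\<lambda>S T. \<integral>\<omega>. V S \<omega> * V T \<omega> \<partial>M) x"
    using assms by (simp add: integral_sum_mult_sum square_integrable_cmult integral_cmult_mult_cmult
        quad_form_def mult_ac)
  finally show ?thesis .
qed

section \<open>Second moments in the travel-time model\<close>

locale travel_time_model = prob_space M for M :: "'w measure" +
  fixes Sg :: "'a set" and N :: nat and yr :: "nat \<Rightarrow> 'a set"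
    and \<theta> :: "'a \<Rightarrow> 'w \<Rightarrow> real" and \<epsilon> :: "nat \<Rightarrow> 'a \<Rightarrow> 'w \<Rightarrow> real"
    and \<mu> \<tau> :: real and \<sigma> :: "'a \<Rightarrow> 'a \<Rightarrow> real"
  assumes finSg: "finite Sg"
    and routes: "\<And>n. n < N \<Longrightarrow> yr n \<noteq> {} \<and> yr n \<subseteq> Sg"
    and th_meas: "\<And>s. s \<in> Sg \<Longrightarrow> \<theta> s \<in> borel_measurable M"
    and th_sq: "\<And>s. s \<in> Sg \<Longrightarrow> integrable M (\<lambda>\<omega>. (\<theta> s \<omega>)^2)"
    and th_indep: "indep_vars (\<lambda>_. (borel :: real measure)) \<theta> Sg"
    and th_mean: "\<And>s. s \<in> Sg \<Longrightarrow> (\<integral>\<omega>. \<theta> s \<omega> \<partial>M) = \<mu>"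
    and th_var: "\<And>s. s \<in> Sg \<Longrightarrow> (\<integral>\<omega>. (\<theta> s \<omega> - \<mu>)^2 \<partial>M) = \<tau>^2"
    and eps_meas: "\<And>n s. n < N \<Longrightarrow> s \<in> yr n \<Longrightarrow> \<epsilon> n s \<in> borel_measurable M"
    and eps_sq: "\<And>n s. n < N \<Longrightarrow> s \<in> yr n \<Longrightarrow> integrable M (\<lambda>\<omega>. (\<epsilon> n s \<omega>)^2)"
    and eps_mean: "\<And>n s. n < N \<Longrightarrow> s \<in> yr n \<Longrightarrow> (\<integral>\<omega>. \<epsilon> n s \<omega> \<partial>M) = 0"
    and eps_cov: "\<And>n s t. n < N \<Longrightarrow> s \<in> yr n \<Longrightarrow> t \<in> yr n \<Longrightarrow>
                      (\<integral>\<omega>. \<epsilon> n s \<omega> * \<epsilon> n t \<omega> \<partial>M) = \<sigma> s t"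
    and eps_indep: "indep_vars (\<lambda>n. PiM (yr n) (\<lambda>_. (borel :: real measure)))
                      (\<lambda>n \<omega>. restrict (\<lambda>s. \<epsilon> n s \<omega>) (yr n)) {..<N}"
    and th_eps_indep: "indep_set
                      {(\<lambda>\<omega>. restrict (\<lambda>s. \<theta> s \<omega>) Sg) -` A \<inter> space M
                         | A. A \<in> sets (PiM Sg (\<lambda>_. (borel :: real measure)))}
                      {(\<lambda>\<omega>. restrict (\<lambda>(n, s). \<epsilon> n s \<omega>) (SIGMA n:{..<N}. yr n)) -` B \<inter> space M
                         | B. B \<in> sets (PiM (SIGMA n:{..<N}. yr n) (\<lambda>_. (borel :: real measure)))}"
begin

lemma finite_route: "n < N \<Longrightarrow> finite (yr n)"
  using routes finSg finite_subset by blast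

definition prior_dev :: "'a \<Rightarrow> 'w \<Rightarrow> real" where
  "prior_dev s \<omega> = \<theta> s \<omega> - \<mu>"

lemma square_integrable_prior_dev: "s \<in> Sg \<Longrightarrow> square_integrable M (prior_dev s)"
  using square_integrable_add[OF _ square_integrable_const[of "- \<mu>"], of "\<theta> s"] th_meas th_sq
  by (simp add: square_integrable_def prior_dev_def[abs_def])

lemma square_integrable_error: "n < N \<Longrightarrow> s \<in> yr n \<Longrightarrow> square_integrable M (\<epsilon> n s)"
  using eps_meas eps_sq by (simp add: square_integrable_def)

lemma integral_prior_dev: "s \<in> Sg \<Longrightarrow> (\<integral>\<omega>. prior_dev s \<omega> \<partial>M) = 0"
  using th_mean th_meas th_sq by (simp add: prior_dev_def prob_space square_integrable_imp_integrable)

lemma integral_prior_dev_mult: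
  assumes "s \<in> Sg" "t \<in> Sg"
  shows "(\<integral>\<omega>. prior_dev s \<omega> * prior_dev t \<omega> \<partial>M) = (if s = t then \<tau>\<^sup>2 else 0)"
proof (cases "s = t")
  case True
  then show ?thesis using th_var[OF assms(1)] by (simp add: prior_dev_def power2_eq_square)
next
  case False
  have "indep_var borel (\<theta> s) borel (\<theta> t)"
    using indep_vars_imp_indep_var[OF th_indep assms False] .
  then have "indep_var borel (prior_dev s) borel (prior_dev t)"
    using indep_var_compose[of borel "\<theta> s" borel "\<theta> t" "\<lambda>x. x - \<mu>" borel "\<lambda>x. x - \<mu>" borel]
    by (simp add: prior_dev_def[abs_def] comp_def)
  then show ?thesis
    using False assms by (simp add: indep_var_lebesgue_integral integrable_if_square_integrable
        square_integrable_prior_dev integral_prior_dev)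
qed

lemma integral_error_mult:
  assumes "n < N" "n' < N" "s \<in> yr n" "t \<in> yr n'"
  shows "(\<integral>\<omega>. \<epsilon> n s \<omega> * \<epsilon> n' t \<omega> \<partial>M) = (if n = n' then \<sigma> s t else 0)"
proof (cases "n = n'")
  case True
  then show ?thesis using eps_cov assms by simp
next
  case False
  have "indep_var borel (\<epsilon> n s) borel (\<epsilon> n' t)"
    using indep_var_components[OF indep_vars_imp_indep_var[OF eps_indep, of n n']] assms False
    by simp
  then show ?thesis
    using False assms by (simp add: indep_var_lebesgue_integral integrable_if_square_integrable
        square_integrable_error eps_mean)
qed

lemma integral_prior_dev_error_mult:
  assumes "s \<in> Sg" "n < N" "t \<in> yr n"
  shows "(\<integral>\<omega>. prior_dev s \<omega> * \<epsilon> n t \<omega> \<partial>M) = 0"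
proof -
  \<comment> \<open>\<open>indep_var\<close> needs both variables of the same type, so the independence of the prior
    vector and the error vector is passed to the components via generating sets\<close>
  have "indep_set {\<theta> s -` A \<inter> space M | A. A \<in> sets borel} {\<epsilon> n t -` A \<inter> space M | A. A \<in> sets borel}"
    using preimages_component_subset[of s Sg \<theta>]
      preimages_component_subset[of "(n, t)" "SIGMA n:{..<N}. yr n" "\<lambda>p \<omega>. case p of (n, s) \<Rightarrow> \<epsilon> n s \<omega>"]
      assms
    by (intro indep_set_mono[OF th_eps_indep]) auto
  then have "indep_var borel (\<theta> s) borel (\<epsilon> n t)"
    using assms by (intro indep_var_of_indep_set th_meas eps_meas)
  then have "indep_var borel (prior_dev s) borel (\<epsilon> n t)"
    using indep_var_compose[of borel "\<theta> s" borel "\<epsilon> n t" "\<lambda>x. x - \<mu>" borel id borel]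
    by (simp add: prior_dev_def[abs_def] comp_def)
  then show ?thesis
    using assms by (simp add: indep_var_lebesgue_integral integrable_if_square_integrable
        square_integrable_prior_dev square_integrable_error integral_prior_dev)
qed

definition prior_comb :: "('a \<Rightarrow> real) \<Rightarrow> 'w \<Rightarrow> real" where
  "prior_comb a \<omega> = (\<Sum>s\<in>Sg. a s * prior_dev s \<omega>)"

definition error_comb :: "nat set \<Rightarrow> (nat \<Rightarrow> 'a \<Rightarrow> real) \<Rightarrow> 'w \<Rightarrow> real" where
  "error_comb A b \<omega> = (\<Sum>n\<in>A. \<Sum>s\<in>yr n. b n s * \<epsilon> n s \<omega>)"

definition linear_stat :: "nat set \<Rightarrow> real \<Rightarrow> ('a \<Rightarrow> real) \<Rightarrow> (nat \<Rightarrow> 'a \<Rightarrow> real) \<Rightarrow> 'w \<Rightarrow> real" where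
  "linear_stat A c a b \<omega> = c + prior_comb a \<omega> + error_comb A b \<omega>"

lemma square_integrable_prior_comb: "square_integrable M (prior_comb a)"
  unfolding prior_comb_def[abs_def]
  by (intro square_integrable_sum square_integrable_cmult square_integrable_prior_dev)

lemma square_integrable_trip_error_comb:
  "n < N \<Longrightarrow> square_integrable M (\<lambda>\<omega>. \<Sum>s\<in>yr n. b n s * \<epsilon> n s \<omega>)"
  by (intro square_integrable_sum square_integrable_cmult square_integrable_error)

lemma square_integrable_error_comb: "A \<subseteq> {..<N} \<Longrightarrow> square_integrable M (error_comb A b)"
  unfolding error_comb_def[abs_def] by (intro square_integrable_sum square_integrable_trip_error_comb) auto

lemma square_integrable_linear_stat: "A \<subseteq> {..<N} \<Longrightarrow> square_integrable M (linear_stat A c a b)"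
  unfolding linear_stat_def[abs_def]
  by (intro square_integrable_add square_integrable_const square_integrable_prior_comb
      square_integrable_error_comb)

lemma integral_prior_comb: "(\<integral>\<omega>. prior_comb a \<omega> \<partial>M) = 0"
  unfolding prior_comb_def
  by (simp add: integrable_if_square_integrable square_integrable_prior_dev integral_prior_dev)

lemma integral_error_comb:
  assumes "A \<subseteq> {..<N}"
  shows "(\<integral>\<omega>. error_comb A b \<omega> \<partial>M) = 0"
proof -
  have "(\<integral>\<omega>. error_comb A b \<omega> \<partial>M) = (\<Sum>n\<in>A. \<Sum>s\<in>yr n. b n s * (\<integral>\<omega>. \<epsilon> n s \<omega> \<partial>M))"
    unfolding error_comb_def using assms
    by (subst Bochner_Integration.integral_sum)
      (auto simp: integrable_if_square_integrable square_integrable_trip_error_comb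
        square_integrable_error intro!: sum.cong)
  also have "\<dots> = 0"
    using assms by (auto simp: eps_mean intro!: sum.neutral)
  finally show ?thesis .
qed

lemma integral_prior_comb_mult:
  "(\<integral>\<omega>. prior_comb a \<omega> * prior_comb a' \<omega> \<partial>M) = \<tau>\<^sup>2 * (\<Sum>s\<in>Sg. a s * a' s)"
proof -
  have "(\<integral>\<omega>. prior_comb a \<omega> * prior_comb a' \<omega> \<partial>M)
     = (\<Sum>s\<in>Sg. \<Sum>t\<in>Sg. (a s * a' t) * (if s = t then \<tau>\<^sup>2 else 0))"
    unfolding prior_comb_def using finSg
    by (simp add: integral_sum_mult_sum square_integrable_cmult square_integrable_prior_dev
        integral_cmult_mult_cmult integral_prior_dev_mult)
  also have "\<dots> = \<tau>\<^sup>2 * (\<Sum>s\<in>Sg. a s * a' s)"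
    using finSg by (simp add: sum_distrib_left mult_ac if_distrib sum.delta cong: if_cong)
  finally show ?thesis .
qed

lemma integral_prior_comb_error_comb_mult:
  assumes "A \<subseteq> {..<N}"
  shows "(\<integral>\<omega>. prior_comb a \<omega> * error_comb A b \<omega> \<partial>M) = 0"
proof -
  have "(\<integral>\<omega>. prior_comb a \<omega> * error_comb A b \<omega> \<partial>M)
     = (\<Sum>s\<in>Sg. \<Sum>n\<in>A. \<integral>\<omega>. a s * prior_dev s \<omega> * (\<Sum>t\<in>yr n. b n t * \<epsilon> n t \<omega>) \<partial>M)"
    unfolding prior_comb_def error_comb_def using assms finSg finite_subset[OF assms]
    by (intro integral_sum_mult_sum)
      (auto intro: square_integrable_cmult square_integrable_prior_dev square_integrable_trip_error_comb)
  also have "\<dots> = (\<Sum>s\<in>Sg. \<Sum>n\<in>A. \<Sum>t\<in>yr n. \<integral>\<omega>. a s * prior_dev s \<omega> * (b n t * \<epsilon> n t \<omega>) \<partial>M)"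
    using assms by (intro sum.cong refl integral_mult_sum)
      (auto intro: finite_route square_integrable_cmult square_integrable_prior_dev square_integrable_error)
  also have "\<dots> = 0"
    using assms by (intro sum.neutral ballI)
      (auto simp: integral_cmult_mult_cmult integral_prior_dev_error_mult)
  finally show ?thesis .
qed

lemma integral_error_comb_mult:
  assumes "A \<subseteq> {..<N}"
  shows "(\<integral>\<omega>. error_comb A b \<omega> * error_comb A b' \<omega> \<partial>M)
       = (\<Sum>n\<in>A. \<Sum>s\<in>yr n. \<Sum>t\<in>yr n. b n s * b' n t * \<sigma> s t)"
proof -
  have trip: "(\<integral>\<omega>. (\<Sum>s\<in>yr n. b n s * \<epsilon> n s \<omega>) * (\<Sum>t\<in>yr n'. b' n' t * \<epsilon> n' t \<omega>) \<partial>M)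
     = (if n = n' then (\<Sum>s\<in>yr n. \<Sum>t\<in>yr n. b n s * b' n t * \<sigma> s t) else 0)"
    if "n \<in> A" "n' \<in> A" for n n'
  proof -
    have "(\<integral>\<omega>. (\<Sum>s\<in>yr n. b n s * \<epsilon> n s \<omega>) * (\<Sum>t\<in>yr n'. b' n' t * \<epsilon> n' t \<omega>) \<partial>M)
       = (\<Sum>s\<in>yr n. \<Sum>t\<in>yr n'. \<integral>\<omega>. b n s * \<epsilon> n s \<omega> * (b' n' t * \<epsilon> n' t \<omega>) \<partial>M)"
      using that assms
      by (intro integral_sum_mult_sum) (auto intro: finite_route square_integrable_cmult square_integrable_error)
    also have "\<dots> = (\<Sum>s\<in>yr n. \<Sum>t\<in>yr n'. (b n s * b' n' t) * (if n = n' then \<sigma> s t else 0))"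
      using that assms
      by (intro sum.cong refl) (auto simp: integral_cmult_mult_cmult integral_error_mult[of n n'] subset_eq)
    finally show ?thesis
      by (simp add: mult_ac)
  qed
  have "(\<integral>\<omega>. error_comb A b \<omega> * error_comb A b' \<omega> \<partial>M)
     = (\<Sum>n\<in>A. \<Sum>n'\<in>A. if n = n' then (\<Sum>s\<in>yr n. \<Sum>t\<in>yr n. b n s * b' n t * \<sigma> s t) else 0)"
    unfolding error_comb_def using assms finite_subset[OF assms]
    by (simp add: integral_sum_mult_sum square_integrable_trip_error_comb subset_eq trip cong: sum.cong)
  also have "\<dots> = (\<Sum>n\<in>A. \<Sum>s\<in>yr n. \<Sum>t\<in>yr n. b n s * b' n t * \<sigma> s t)"
    using finite_subset[OF assms] by (simp add: sum.delta)
  finally show ?thesis .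
qed

lemma integral_linear_stat_mult:
  assumes "A \<subseteq> {..<N}"
  shows "(\<integral>\<omega>. linear_stat A c a b \<omega> * linear_stat A c' a' b' \<omega> \<partial>M)
     = c * c' + \<tau>\<^sup>2 * (\<Sum>s\<in>Sg. a s * a' s) + (\<Sum>n\<in>A. \<Sum>s\<in>yr n. \<Sum>t\<in>yr n. b n s * b' n t * \<sigma> s t)"
proof -
  define X where "X i = [\<lambda>_. c, prior_comb a, error_comb A b] ! i" for i
  define Y where "Y i = [\<lambda>_. c', prior_comb a', error_comb A b'] ! i" for i
  have "i < 3 \<Longrightarrow> square_integrable M (X i)" "i < 3 \<Longrightarrow> square_integrable M (Y i)" for i
    using assms by (auto simp: X_def Y_def numeral_3_eq_3 less_Suc_eq square_integrable_const
        square_integrable_prior_comb square_integrable_error_comb)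
  then have "(\<integral>\<omega>. linear_stat A c a b \<omega> * linear_stat A c' a' b' \<omega> \<partial>M)
      = (\<Sum>i<3. \<Sum>j<3. \<integral>\<omega>. X i \<omega> * Y j \<omega> \<partial>M)"
    by (subst integral_sum_mult_sum[symmetric])
      (simp_all add: X_def Y_def linear_stat_def numeral_3_eq_3 add.assoc)
  also have "\<dots> = c * c' + \<tau>\<^sup>2 * (\<Sum>s\<in>Sg. a s * a' s) + (\<Sum>n\<in>A. \<Sum>s\<in>yr n. \<Sum>t\<in>yr n. b n s * b' n t * \<sigma> s t)"
    using assms integral_prior_comb_error_comb_mult[OF assms, of a' b]
      integral_prior_comb_error_comb_mult[OF assms, of a b']
    by (simp add: X_def Y_def numeral_3_eq_3 integral_prior_comb integral_error_comb mult.commute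
        integral_prior_comb_mult integral_prior_comb_error_comb_mult integral_error_comb_mult prob_space)
  finally show ?thesis .
qed

lemma error_quad_form_nonneg:
  assumes "A \<subseteq> {..<N}"
  shows "0 \<le> (\<Sum>n\<in>A. \<Sum>s\<in>yr n. \<Sum>t\<in>yr n. b n s * b n t * \<sigma> s t)"
proof -
  have "0 \<le> (\<integral>\<omega>. error_comb A b \<omega> * error_comb A b \<omega> \<partial>M)"
    by (intro integral_nonneg_AE) auto
  then show ?thesis
    using integral_error_comb_mult[OF assms, of b b] by simp
qed

section \<open>The segment-based estimator\<close>

definition seg_cov :: "'a set \<Rightarrow> 'a set \<Rightarrow> real" where
  "seg_cov S T = real (Ncnt yr N (S \<union> T)) / (real (Ncnt yr N S) * real (Ncnt yr N T))
     * (\<Sum>s\<in>S. \<Sum>t\<in>T. \<sigma> s t)"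

definition seg_avg_coef :: "'a set \<Rightarrow> nat \<Rightarrow> 'a \<Rightarrow> real" where
  "seg_avg_coef S n s = (if S \<subseteq> yr n \<and> s \<in> S then 1 / real (Ncnt yr N S) else 0)"

definition seg_block_error :: "('a set \<Rightarrow> real) \<Rightarrow> 'a set \<Rightarrow> 'w \<Rightarrow> real" where
  "seg_block_error \<phi> S = linear_stat {..<N} 0 (\<lambda>s. if s \<in> S then \<phi> S - 1 else 0)
     (\<lambda>n s. \<phi> S * seg_avg_coef S n s)"

lemma seg_avg_coef_cov:
  "(\<Sum>n<N. \<Sum>s\<in>yr n. \<Sum>t\<in>yr n. (p * seg_avg_coef S n s) * (q * seg_avg_coef T n t) * \<sigma> s t)
     = p * q * seg_cov S T"
proof -
  define K where "K = p / real (Ncnt yr N S) * (q / real (Ncnt yr N T)) * (\<Sum>s\<in>S. \<Sum>t\<in>T. \<sigma> s t)"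
  have trip: "(\<Sum>s\<in>yr n. \<Sum>t\<in>yr n. (p * seg_avg_coef S n s) * (q * seg_avg_coef T n t) * \<sigma> s t)
      = (if S \<union> T \<subseteq> yr n then K else 0)" if "n < N" for n
  proof (cases "S \<union> T \<subseteq> yr n")
    case True
    have "(\<Sum>s\<in>yr n. \<Sum>t\<in>yr n. (p * seg_avg_coef S n s) * (q * seg_avg_coef T n t) * \<sigma> s t)
        = (\<Sum>s\<in>yr n. \<Sum>t\<in>yr n. (if s \<in> S then p / real (Ncnt yr N S) else 0)
             * (if t \<in> T then q / real (Ncnt yr N T) else 0) * \<sigma> s t)"
      using True by (intro sum.cong) (auto simp: seg_avg_coef_def)
    also have "\<dots> = K"
      using True finite_route[OF that] unfolding K_def by (intro double_sum_if_mem_subset) auto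
    finally show ?thesis
      using True by simp
  qed (auto simp: seg_avg_coef_def intro!: sum.neutral)
  have "(\<Sum>n<N. \<Sum>s\<in>yr n. \<Sum>t\<in>yr n. (p * seg_avg_coef S n s) * (q * seg_avg_coef T n t) * \<sigma> s t)
      = real (Ncnt yr N (S \<union> T)) * K"
    by (simp add: trip sum.If_cases Ncnt_def Int_def lessThan_def)
  then show ?thesis
    by (simp add: K_def seg_cov_def field_simps)
qed

lemma seg_cov_sym: "seg_cov S T = seg_cov T S"
  \<comment> \<open>\<open>\<sigma>\<close> is only known to be symmetric on segments of a common route, which is exactly
    when the weight \<open>Ncnt yr N (S \<union> T)\<close> is nonzero\<close>
proof (cases "Ncnt yr N (S \<union> T) = 0")
  case True
  then show ?thesis by (simp add: seg_cov_def Un_commute)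
next
  case False
  then obtain n where n: "n < N" "S \<union> T \<subseteq> yr n"
    unfolding Ncnt_def by (metis (mono_tags, lifting) card.empty empty_Collect_eq)
  have "\<sigma> s t = \<sigma> t s" if "s \<in> S" "t \<in> T" for s t
    using eps_cov[of n s t] eps_cov[of n t s] n that by (auto simp: mult.commute)
  then have "(\<Sum>s\<in>S. \<Sum>t\<in>T. \<sigma> s t) = (\<Sum>t\<in>T. \<Sum>s\<in>S. \<sigma> t s)"
    by (subst sum.swap) (auto intro!: sum.cong)
  then show ?thesis
    by (simp add: seg_cov_def Un_commute mult.commute)
qed

lemma integral_seg_block_error_mult:
  assumes "S \<subseteq> Sg" "T \<subseteq> Sg" "S = T \<or> S \<inter> T = {}"
  shows "(\<integral>\<omega>. seg_block_error \<phi> S \<omega> * seg_block_error \<phi> T \<omega> \<partial>M)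
    = (if S = T then real (card S) * \<tau>\<^sup>2 * (\<phi> S - 1)\<^sup>2 else 0) + \<phi> S * \<phi> T * seg_cov S T"
proof -
  have "(\<Sum>s\<in>Sg. (if s \<in> S then \<phi> S - 1 else 0) * (if s \<in> T then \<phi> T - 1 else 0))
      = (\<Sum>s\<in>S \<inter> T. (\<phi> S - 1) * (\<phi> T - 1))"
    using assms finSg by (subst sum_if_mem_subset[symmetric]) (auto intro!: sum.cong)
  also have "\<dots> = (if S = T then real (card S) * (\<phi> S - 1)\<^sup>2 else 0)"
    using assms(3) by (auto simp: power2_eq_square)
  finally have "(\<Sum>s\<in>Sg. (if s \<in> S then \<phi> S - 1 else 0) * (if s \<in> T then \<phi> T - 1 else 0))
      = (if S = T then real (card S) * (\<phi> S - 1)\<^sup>2 else 0)" .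
  then show ?thesis
    unfolding seg_block_error_def integral_linear_stat_mult[OF order_refl] seg_avg_coef_cov
    by (simp add: algebra_simps)
qed

lemma seg_cov_psd: "finite P \<Longrightarrow> 0 \<le> quad_form P seg_cov x"
proof -
  assume "finite P"
  define V where "V S = linear_stat {..<N} 0 (\<lambda>_. 0) (seg_avg_coef S)" for S
  have "seg_cov = (\<lambda>S T. \<integral>\<omega>. V S \<omega> * V T \<omega> \<partial>M)"
    using seg_avg_coef_cov[of 1 _ 1] by (simp add: V_def integral_linear_stat_mult)
  then show ?thesis
    using quad_form_gram_nonneg[OF \<open>finite P\<close>, where M = M and V = V and x = x]
    by (simp add: V_def square_integrable_linear_stat)
qed

lemma seg_block_error_eq:
  assumes "S \<subseteq> Sg"
  shows "seg_block_error \<phi> S \<omega> = (\<phi> S - 1) * (\<Sum>s\<in>S. prior_dev s \<omega>)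
    + \<phi> S / real (Ncnt yr N S) * (\<Sum>n | n < N \<and> S \<subseteq> yr n. \<Sum>s\<in>S. \<epsilon> n s \<omega>)"
proof -
  have "prior_comb (\<lambda>s. if s \<in> S then \<phi> S - 1 else 0) \<omega> = (\<Sum>s\<in>S. (\<phi> S - 1) * prior_dev s \<omega>)"
    unfolding prior_comb_def by (subst sum_if_mem_subset[symmetric, OF finSg assms]) (auto intro!: sum.cong)
  moreover have "(\<Sum>s\<in>yr n. \<phi> S * seg_avg_coef S n s * \<epsilon> n s \<omega>)
      = (if S \<subseteq> yr n then (\<Sum>s\<in>S. \<phi> S / real (Ncnt yr N S) * \<epsilon> n s \<omega>) else 0)" if "n < N" for n
  proof (cases "S \<subseteq> yr n")
    case True
    then show ?thesis
      by (subst sum_if_mem_subset[symmetric, OF finite_route[OF that] True])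
        (auto simp: seg_avg_coef_def intro!: sum.cong)
  qed (auto simp: seg_avg_coef_def intro!: sum.neutral)
  then have "error_comb {..<N} (\<lambda>n s. \<phi> S * seg_avg_coef S n s) \<omega>
      = (\<Sum>n | n < N \<and> S \<subseteq> yr n. \<Sum>s\<in>S. \<phi> S / real (Ncnt yr N S) * \<epsilon> n s \<omega>)"
    unfolding error_comb_def by (simp add: sum.inter_filter[symmetric] lessThan_def)
  ultimately show ?thesis
    by (simp add: seg_block_error_def linear_stat_def sum_distrib_left)
qed

lemma seg_term_error:
  assumes "S \<subseteq> Sg" "Ncnt yr N S > 0"
  shows "(1 - \<phi> S) * real (card S) * \<mu>
      + \<phi> S * (\<Sum>n | n < N \<and> S \<subseteq> yr n. \<Sum>s\<in>S. Tobs \<theta> \<epsilon> n s \<omega>) / real (Ncnt yr N S)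
      - (\<Sum>s\<in>S. \<theta> s \<omega>) = seg_block_error \<phi> S \<omega>"
proof -
  have "(\<Sum>n | n < N \<and> S \<subseteq> yr n. \<Sum>s\<in>S. Tobs \<theta> \<epsilon> n s \<omega>)
      = real (Ncnt yr N S) * (\<Sum>s\<in>S. \<theta> s \<omega>) + (\<Sum>n | n < N \<and> S \<subseteq> yr n. \<Sum>s\<in>S. \<epsilon> n s \<omega>)"
    by (simp add: Tobs_def sum.distrib Ncnt_def)
  moreover have "(\<Sum>s\<in>S. \<theta> s \<omega>) = (\<Sum>s\<in>S. prior_dev s \<omega>) + real (card S) * \<mu>"
    by (simp add: prior_dev_def sum_subtractf)
  ultimately show ?thesis
    using assms by (simp add: seg_block_error_eq field_simps)
qed

lemma seg_est_error:
  assumes "partition_on y P" "y \<subseteq> Sg" "\<forall>S\<in>P. Ncnt yr N S \<ge> 1"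
  shows "seg_est yr N \<theta> \<epsilon> \<mu> P \<phi> \<omega> - (\<Sum>s\<in>y. \<theta> s \<omega>) = (\<Sum>S\<in>P. seg_block_error \<phi> S \<omega>)"
proof -
  have yU: "\<Union>P = y"
    using partition_onD1[OF assms(1)] by simp
  have "finite y"
    using assms(2) finSg finite_subset by blast
  then have "finite P" "\<forall>S\<in>P. finite S"
    using finite_elements[OF _ assms(1)] yU rev_finite_subset[OF _ Union_upper] by blast+
  then have sum_\<theta>: "(\<Sum>s\<in>\<Union>P. \<theta> s \<omega>) = (\<Sum>S\<in>P. \<Sum>s\<in>S. \<theta> s \<omega>)"
    using disjointD[OF partition_onD2[OF assms(1)]] by (subst sum.Union_disjoint) auto
  show ?thesis
    unfolding seg_est_def yU[symmetric] sum_\<theta> sum_subtractf[symmetric]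
    using assms yU by (intro sum.cong refl seg_term_error) auto
qed

lemma int_risk_seg_est:
  assumes "partition_on y P" "y \<subseteq> Sg" "\<forall>S\<in>P. Ncnt yr N S \<ge> 1"
  shows "int_risk M (seg_est yr N \<theta> \<epsilon> \<mu> P \<phi>) \<theta> y
    = quad_form P seg_cov \<phi> + (\<Sum>S\<in>P. (\<phi> S - 1)\<^sup>2 * (real (card S) * \<tau>\<^sup>2))"
proof -
  have "finite P"
    using finite_elements[OF finite_subset[OF assms(2) finSg] assms(1)] .
  have sub: "S \<subseteq> Sg" if "S \<in> P" for S
    using partition_onD1[OF assms(1)] assms(2) that by blast
  have disj: "S = T \<or> S \<inter> T = {}" if "S \<in> P" "T \<in> P" for S T
    using disjointD[OF partition_onD2[OF assms(1)]] that by blast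
  have "int_risk M (seg_est yr N \<theta> \<epsilon> \<mu> P \<phi>) \<theta> y
      = (\<integral>\<omega>. (\<Sum>S\<in>P. seg_block_error \<phi> S \<omega>) * (\<Sum>T\<in>P. seg_block_error \<phi> T \<omega>) \<partial>M)"
    unfolding int_risk_def seg_est_error[OF assms] by (simp add: power2_eq_square)
  also have "\<dots> = (\<Sum>S\<in>P. \<Sum>T\<in>P. \<integral>\<omega>. seg_block_error \<phi> S \<omega> * seg_block_error \<phi> T \<omega> \<partial>M)"
    using \<open>finite P\<close> unfolding seg_block_error_def
    by (intro integral_sum_mult_sum square_integrable_linear_stat) auto
  also have "\<dots> = (\<Sum>S\<in>P. \<Sum>T\<in>P. (if S = T then real (card S) * \<tau>\<^sup>2 * (\<phi> S - 1)\<^sup>2 else 0)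
      + \<phi> S * \<phi> T * seg_cov S T)"
    using sub disj by (intro sum.cong refl integral_seg_block_error_mult) auto
  also have "\<dots> = quad_form P seg_cov \<phi> + (\<Sum>S\<in>P. (\<phi> S - 1)\<^sup>2 * (real (card S) * \<tau>\<^sup>2))"
    using \<open>finite P\<close> by (simp add: sum.distrib quad_form_def mult_ac)
  finally show ?thesis .
qed

lemma seg_est_optimal:
  assumes "partition_on y P" "y \<subseteq> Sg" "\<forall>S\<in>P. Ncnt yr N S \<ge> 1" "\<tau>\<^sup>2 > 0"
  shows "\<exists>\<phi>s. seg_system yr N \<sigma> \<tau> P \<phi>s
           \<and> (\<forall>\<psi>. seg_system yr N \<sigma> \<tau> P \<psi> \<longrightarrow> (\<forall>S\<in>P. \<psi> S = \<phi>s S))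
           \<and> (\<forall>\<phi>. (\<forall>\<phi>'. int_risk M (seg_est yr N \<theta> \<epsilon> \<mu> P \<phi>) \<theta> y
                          \<le> int_risk M (seg_est yr N \<theta> \<epsilon> \<mu> P \<phi>') \<theta> y)
                   \<longleftrightarrow> (\<forall>S\<in>P. \<phi> S = \<phi>s S))"
proof -
  have "finite P"
    using finite_elements[OF finite_subset[OF assms(2) finSg] assms(1)] .
  have "0 < real (card S) * \<tau>\<^sup>2" if "S \<in> P" for S
  proof -
    have "finite S" "S \<noteq> {}"
      using partition_onD1[OF assms(1)] partition_onD3[OF assms(1)] assms(2) finSg that
      by (auto intro: rev_finite_subset)
    then show ?thesis
      using assms(4) by (simp add: card_gt_0_iff)
  qed
  moreover have "seg_system yr N \<sigma> \<tau> P \<psi> \<longleftrightarrow>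
      (\<forall>S\<in>P. (\<Sum>T\<in>P. seg_cov S T * \<psi> T) + (\<psi> S - 1) * (real (card S) * \<tau>\<^sup>2) = 0)" for \<psi>
    by (simp add: seg_system_def seg_cov_def mult_ac)
  ultimately show ?thesis
    using seg_cov_sym seg_cov_psd[OF \<open>finite P\<close>] int_risk_seg_est[OF assms(1-3)]
    by (intro penalized_quadratic_unique_minimizer[OF \<open>finite P\<close>]) auto
qed

section \<open>The route-based estimator\<close>

definition trips_in :: "'a set set \<Rightarrow> nat set" where
  "trips_in \<delta> = {n. n < N \<and> yr n \<in> \<delta>}"

definition centred_route_avg :: "'a set set \<Rightarrow> 'a set \<Rightarrow> 'w \<Rightarrow> real" where
  "centred_route_avg \<delta> y = linear_stat (trips_in \<delta>) (\<mu> * (ybar yr N \<delta> - real (card y)))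
     (\<lambda>s. real (Ndelta yr N \<delta> s) / real (Mcnt yr N \<delta>)) (\<lambda>n s. 1 / real (Mcnt yr N \<delta>))"

definition centred_target :: "'a set set \<Rightarrow> 'a set \<Rightarrow> 'w \<Rightarrow> real" where
  "centred_target \<delta> y = linear_stat (trips_in \<delta>) 0 (\<lambda>s. if s \<in> y then 1 else 0) (\<lambda>n s. 0)"

lemma trips_in_subset: "trips_in \<delta> \<subseteq> {..<N}"
  by (auto simp: trips_in_def)

lemma Mcnt_eq_card_trips_in: "Mcnt yr N \<delta> = card (trips_in \<delta>)"
  by (simp add: Mcnt_def trips_in_def)

lemma Ndelta_eq_card_trips_in: "Ndelta yr N \<delta> s = card {n \<in> trips_in \<delta>. s \<in> yr n}"
  unfolding Ndelta_def trips_in_def by (rule arg_cong[where f=card]) auto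

lemma route_est_error:
  assumes "Mcnt yr N \<delta> \<ge> 1" "y \<subseteq> Sg"
  shows "route_est yr N \<theta> \<epsilon> \<mu> \<delta> y p \<omega> - (\<Sum>s\<in>y. \<theta> s \<omega>)
    = p * centred_route_avg \<delta> y \<omega> - centred_target \<delta> y \<omega>"
proof -
  define A where "A = trips_in \<delta>"
  define m where "m = real (Mcnt yr N \<delta>)"
  have "m > 0" "finite A"
    using assms(1) finite_subset[OF trips_in_subset] by (auto simp: m_def A_def)
  have "centred_target \<delta> y \<omega> = (\<Sum>s\<in>Sg. if s \<in> y then prior_dev s \<omega> else 0)"
    by (auto simp: centred_target_def linear_stat_def prior_comb_def error_comb_def intro!: sum.cong)
  then have target: "centred_target \<delta> y \<omega> = (\<Sum>s\<in>y. \<theta> s \<omega>) - real (card y) * \<mu>"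
    by (simp add: sum_if_mem_subset[OF finSg assms(2)] prior_dev_def sum_subtractf)
  have "(\<Sum>n\<in>A. \<Sum>s\<in>yr n. Tobs \<theta> \<epsilon> n s \<omega>)
      = (\<Sum>n\<in>A. \<Sum>s\<in>yr n. prior_dev s \<omega>) + \<mu> * (\<Sum>n\<in>A. real (card (yr n)))
        + (\<Sum>n\<in>A. \<Sum>s\<in>yr n. \<epsilon> n s \<omega>)"
    by (simp add: Tobs_def prior_dev_def sum.distrib sum_subtractf sum_distrib_left mult.commute)
  also have "(\<Sum>n\<in>A. \<Sum>s\<in>yr n. prior_dev s \<omega>) = (\<Sum>s\<in>Sg. real (Ndelta yr N \<delta> s) * prior_dev s \<omega>)"
    unfolding Ndelta_eq_card_trips_in A_def
    by (rule sum_sum_subsets_count) (use \<open>finite A\<close> routes in \<open>auto simp: A_def trips_in_def finSg\<close>)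
  also have "(\<Sum>n\<in>A. real (card (yr n))) = ybar yr N \<delta> * m"
    unfolding ybar_def m_def[symmetric] using \<open>m > 0\<close> by (simp add: A_def trips_in_def)
  finally show ?thesis
    using \<open>m > 0\<close>
    by (simp add: route_est_def target centred_route_avg_def linear_stat_def prior_comb_def
        error_comb_def m_def[symmetric] A_def[symmetric] trips_in_def[symmetric] field_simps
        sum_divide_distrib[symmetric] sum_distrib_left)
qed

lemma int_risk_route_est:
  assumes "Mcnt yr N \<delta> \<ge> 1" "y \<subseteq> Sg"
  shows "int_risk M (route_est yr N \<theta> \<epsilon> \<mu> \<delta> y p) \<theta> y
    = p\<^sup>2 * (\<integral>\<omega>. centred_route_avg \<delta> y \<omega> * centred_route_avg \<delta> y \<omega> \<partial>M)
      - 2 * p * (\<integral>\<omega>. centred_route_avg \<delta> y \<omega> * centred_target \<delta> y \<omega> \<partial>M)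
      + (\<integral>\<omega>. centred_target \<delta> y \<omega> * centred_target \<delta> y \<omega> \<partial>M)"
  unfolding int_risk_def route_est_error[OF assms] centred_route_avg_def centred_target_def
  by (intro integral_scaled_diff_square square_integrable_linear_stat trips_in_subset)

lemma integral_centred_route_avg_sq:
  assumes "Mcnt yr N \<delta> \<ge> 1"
  shows "(\<integral>\<omega>. centred_route_avg \<delta> y \<omega> * centred_route_avg \<delta> y \<omega> \<partial>M)
    = (\<mu> * (ybar yr N \<delta> - real (card y)))\<^sup>2
      + (\<tau>\<^sup>2 * (\<Sum>s\<in>Sg. (real (Ndelta yr N \<delta> s))\<^sup>2)
         + (\<Sum>n\<in>trips_in \<delta>. \<Sum>s\<in>yr n. \<Sum>t\<in>yr n. \<sigma> s t)) / (real (Mcnt yr N \<delta>))\<^sup>2"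
  using assms
  by (simp add: centred_route_avg_def integral_linear_stat_mult[OF trips_in_subset] power2_eq_square
      sum_divide_distrib[symmetric] sum_distrib_left[symmetric] field_simps)

lemma integral_centred_route_avg_target:
  assumes "y \<subseteq> Sg"
  shows "(\<integral>\<omega>. centred_route_avg \<delta> y \<omega> * centred_target \<delta> y \<omega> \<partial>M)
    = (\<Sum>s\<in>y. real (Ndelta yr N \<delta> s)) * \<tau>\<^sup>2 / real (Mcnt yr N \<delta>)"
proof -
  have "(\<integral>\<omega>. centred_route_avg \<delta> y \<omega> * centred_target \<delta> y \<omega> \<partial>M)
      = \<tau>\<^sup>2 * (\<Sum>s\<in>Sg. if s \<in> y then real (Ndelta yr N \<delta> s) / real (Mcnt yr N \<delta>) else 0)"
    by (simp add: centred_route_avg_def centred_target_def integral_linear_stat_mult[OF trips_in_subset]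
        if_distrib cong: if_cong)
  also have "\<dots> = (\<Sum>s\<in>y. real (Ndelta yr N \<delta> s)) * \<tau>\<^sup>2 / real (Mcnt yr N \<delta>)"
    by (simp add: sum_if_mem_subset[OF finSg assms] sum_divide_distrib[symmetric])
  finally show ?thesis .
qed

lemma integral_centred_route_avg_sq_pos:
  assumes "Mcnt yr N \<delta> \<ge> 1" "\<tau>\<^sup>2 > 0"
  shows "0 < (\<integral>\<omega>. centred_route_avg \<delta> y \<omega> * centred_route_avg \<delta> y \<omega> \<partial>M)"
proof -
  obtain n where n: "n \<in> trips_in \<delta>"
    using assms(1) by (metis Mcnt_eq_card_trips_in card.empty ex_in_conv not_one_le_zero)
  then obtain s where s: "s \<in> yr n"
    using routes by (auto simp: trips_in_def)
  then have "s \<in> Sg" "Ndelta yr N \<delta> s > 0"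
    using n routes finite_subset[OF trips_in_subset]
    by (auto simp: trips_in_def Ndelta_eq_card_trips_in card_gt_0_iff)
  then have "0 < \<tau>\<^sup>2 * (\<Sum>s\<in>Sg. (real (Ndelta yr N \<delta> s))\<^sup>2)"
    using assms(2) finSg by (intro mult_pos_pos sum_pos2[of Sg s]) auto
  moreover have "0 \<le> (\<Sum>n\<in>trips_in \<delta>. \<Sum>s\<in>yr n. \<Sum>t\<in>yr n. \<sigma> s t)"
    using error_quad_form_nonneg[OF trips_in_subset, where b = "\<lambda>_ _. 1"] by simp
  ultimately show ?thesis
    using assms(1) by (simp add: integral_centred_route_avg_sq add_nonneg_pos)
qed

lemma phi_route_eq:
  assumes "\<delta> \<subseteq> yr ` {..<N}" "Mcnt yr N \<delta> \<ge> 1" "y \<subseteq> Sg"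
  shows "phi_route yr N \<sigma> \<mu> \<tau> \<delta> y
    = (\<integral>\<omega>. centred_route_avg \<delta> y \<omega> * centred_target \<delta> y \<omega> \<partial>M)
      / (\<integral>\<omega>. centred_route_avg \<delta> y \<omega> * centred_route_avg \<delta> y \<omega> \<partial>M)"
proof -
  define m where "m = real (Mcnt yr N \<delta>)"
  define Q where "Q = (\<Sum>s\<in>Sg. (real (Ndelta yr N \<delta> s))\<^sup>2 / m) * \<tau>\<^sup>2
    + (\<Sum>n\<in>trips_in \<delta>. \<Sum>s\<in>yr n. \<Sum>t\<in>yr n. \<sigma> s t) / m + m * \<mu>\<^sup>2 * (ybar yr N \<delta> - real (card y))\<^sup>2"
  have "m > 0"
    using assms(2) by (simp add: m_def)
  have "(\<Sum>s\<in>\<Union>\<delta>. (real (Ndelta yr N \<delta> s))\<^sup>2 / m) = (\<Sum>s\<in>Sg. (real (Ndelta yr N \<delta> s))\<^sup>2 / m)"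
  proof (rule sum.mono_neutral_left[OF finSg])
    show "\<Union>\<delta> \<subseteq> Sg"
      using assms(1) routes by auto
    show "\<forall>s\<in>Sg - \<Union>\<delta>. (real (Ndelta yr N \<delta> s))\<^sup>2 / m = 0"
      by (auto simp: Ndelta_def)
  qed
  then have "phi_route yr N \<sigma> \<mu> \<tau> \<delta> y = (\<Sum>s\<in>y. real (Ndelta yr N \<delta> s)) * \<tau>\<^sup>2 / Q"
    by (simp add: phi_route_def Let_def Q_def m_def trips_in_def)
  moreover have "(\<integral>\<omega>. centred_route_avg \<delta> y \<omega> * centred_route_avg \<delta> y \<omega> \<partial>M) = Q / m"
    using assms(2) \<open>m > 0\<close>
    by (simp add: integral_centred_route_avg_sq Q_def m_def sum_divide_distrib[symmetric] field_simps
        power2_eq_square)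
  ultimately show ?thesis
    using \<open>m > 0\<close> by (simp add: integral_centred_route_avg_target[OF assms(3)] m_def)
qed

lemma route_est_optimal:
  assumes "\<delta> \<subseteq> yr ` {..<N}" "Mcnt yr N \<delta> \<ge> 1" "y \<subseteq> Sg" "\<tau>\<^sup>2 > 0"
  shows "int_risk M (route_est yr N \<theta> \<epsilon> \<mu> \<delta> y (phi_route yr N \<sigma> \<mu> \<tau> \<delta> y)) \<theta> y
       \<le> int_risk M (route_est yr N \<theta> \<epsilon> \<mu> \<delta> y \<phi>) \<theta> y"
  unfolding int_risk_route_est[OF assms(2,3)] phi_route_eq[OF assms(1-3)]
  by (rule quadratic_vertex_le[OF integral_centred_route_avg_sq_pos[OF assms(2,4)]])

end

theorem proposition2p4:
  fixes M :: "'w measure"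
    and Sg :: "'a set"
    and N :: nat
    and yr :: "nat \<Rightarrow> 'a set"
    and \<theta> :: "'a \<Rightarrow> 'w \<Rightarrow> real"
    and \<epsilon> :: "nat \<Rightarrow> 'a \<Rightarrow> 'w \<Rightarrow> real"
    and \<mu> \<tau> :: real
    and \<sigma> :: "'a \<Rightarrow> 'a \<Rightarrow> real"
    and y :: "'a set"
  assumes prob: "prob_space M"
    and finSg: "finite Sg"
    and routes: "\<And>n. n < N \<Longrightarrow> yr n \<noteq> {} \<and> yr n \<subseteq> Sg"
    (* prior: theta_s i.i.d. with mean mu and variance tau^2 > 0 *)
    and th_meas: "\<And>s. s \<in> Sg \<Longrightarrow> \<theta> s \<in> borel_measurable M"
    and th_sq: "\<And>s. s \<in> Sg \<Longrightarrow> integrable M (\<lambda>\<omega>. (\<theta> s \<omega>)^2)"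
    and th_indep: "prob_space.indep_vars M (\<lambda>_. (borel :: real measure)) \<theta> Sg"
    and th_ident: "\<And>s t. s \<in> Sg \<Longrightarrow> t \<in> Sg \<Longrightarrow>
                      distr M (borel :: real measure) (\<theta> s) = distr M borel (\<theta> t)"
    and th_mean: "\<And>s. s \<in> Sg \<Longrightarrow> (\<integral>\<omega>. \<theta> s \<omega> \<partial>M) = \<mu>"
    and th_var: "\<And>s. s \<in> Sg \<Longrightarrow> (\<integral>\<omega>. (\<theta> s \<omega> - \<mu>)^2 \<partial>M) = \<tau>^2"
    and tau_pos: "\<tau>^2 > 0"
    (* errors: mean 0, covariances sigma *)
    and eps_meas: "\<And>n s. n < N \<Longrightarrow> s \<in> yr n \<Longrightarrow> \<epsilon> n s \<in> borel_measurable M"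
    and eps_sq: "\<And>n s. n < N \<Longrightarrow> s \<in> yr n \<Longrightarrow> integrable M (\<lambda>\<omega>. (\<epsilon> n s \<omega>)^2)"
    and eps_mean: "\<And>n s. n < N \<Longrightarrow> s \<in> yr n \<Longrightarrow> (\<integral>\<omega>. \<epsilon> n s \<omega> \<partial>M) = 0"
    and eps_cov: "\<And>n s t. n < N \<Longrightarrow> s \<in> yr n \<Longrightarrow> t \<in> yr n \<Longrightarrow>
                      (\<integral>\<omega>. \<epsilon> n s \<omega> * \<epsilon> n t \<omega> \<partial>M) = \<sigma> s t"
    (* errors from different trips are independent *)
    and eps_indep: "prob_space.indep_vars M (\<lambda>n. PiM (yr n) (\<lambda>_. (borel :: real measure)))
                      (\<lambda>n \<omega>. restrict (\<lambda>s. \<epsilon> n s \<omega>) (yr n)) {..<N}"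
    (* prior independent of the errors *)
    and th_eps_indep: "prob_space.indep_set M
                      {(\<lambda>\<omega>. restrict (\<lambda>s. \<theta> s \<omega>) Sg) -` A \<inter> space M
                         | A. A \<in> sets (PiM Sg (\<lambda>_. (borel :: real measure)))}
                      {(\<lambda>\<omega>. restrict (\<lambda>(n, s). \<epsilon> n s \<omega>) (SIGMA n:{..<N}. yr n)) -` B \<inter> space M
                         | B. B \<in> sets (PiM (SIGMA n:{..<N}. yr n) (\<lambda>_. (borel :: real measure)))}"
    and y_sub: "y \<subseteq> Sg"
  shows
    "(\<forall>P. partition_on y P \<longrightarrow> (\<forall>S\<in>P. Ncnt yr N S \<ge> 1) \<longrightarrow>
        (\<exists>\<phi>s. seg_system yr N \<sigma> \<tau> P \<phi>s
           \<and> (\<forall>\<psi>. seg_system yr N \<sigma> \<tau> P \<psi> \<longrightarrow> (\<forall>S\<in>P. \<psi> S = \<phi>s S))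
           \<and> (\<forall>\<phi>. (\<forall>\<phi>'. int_risk M (seg_est yr N \<theta> \<epsilon> \<mu> P \<phi>) \<theta> y
                          \<le> int_risk M (seg_est yr N \<theta> \<epsilon> \<mu> P \<phi>') \<theta> y)
                   \<longleftrightarrow> (\<forall>S\<in>P. \<phi> S = \<phi>s S))))
     \<and>
     (\<forall>\<delta>. \<delta> \<subseteq> yr ` {..<N} \<longrightarrow> Mcnt yr N \<delta> \<ge> 1 \<longrightarrow>
        (\<forall>\<phi>. int_risk M (route_est yr N \<theta> \<epsilon> \<mu> \<delta> y (phi_route yr N \<sigma> \<mu> \<tau> \<delta> y)) \<theta> y
              \<le> int_risk M (route_est yr N \<theta> \<epsilon> \<mu> \<delta> y \<phi>) \<theta> y))"
proof -
  interpret travel_time_model M Sg N yr \<theta> \<epsilon> \<mu> \<tau> \<sigma>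
    by (rule travel_time_model.intro[OF prob travel_time_model_axioms.intro[OF finSg routes th_meas
          th_sq th_indep th_mean th_var eps_meas eps_sq eps_mean eps_cov eps_indep th_eps_indep]])
  show ?thesis
    using seg_est_optimal[OF _ y_sub _ tau_pos] route_est_optimal[OF _ _ y_sub tau_pos]
    by (intro conjI allI impI) auto
qed

end
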